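(* In $\widehat{\mathcal{C}}$ there is a morphism $\forall:\mathbb{F}^{\mathbb{I}}\to\mathbb{F}$ which is internally right adjoint to the constant map $\mathbb{F}\to\mathbb{F}^{\mathbb{I}}$, $\phi\mapsto\lambda\_.\phi$, of internal posets; i.e. in the internal logic, for all $\phi:\mathbb{F}$ and $f:\mathbb{I}\to\mathbb{F}$, $\big(\forall (i:\mathbb{I}).\ \phi\Rightarrow f(i)\big)\iff\big(\phi\Rightarrow\forall(f)\big)$.
   Context: $\mathcal{C}$ is the category of cubes: objects finite sets of names, morphisms $I\to J$ functions $J\to\mathrm{dM}(I)$ with $\mathrm{dM}(I)$ the free De Morgan algebra on $I$, composition by substitution. $\mathbb{I}$ is the cubical set $I\mapsto\mathrm{dM}(I)$, an internal De Morgan algebra. $\mathbb{F}$ is the image (as a subobject of the subobject classifier $\Omega$) of the map $\mathbb{I}\to\Omega$, $r\mapsto(r=1)$, with lattice structure inherited from $\Omega$; concretely $\mathbb{F}(I)$ is the distributive lattice generated by symbols $(i=0),(i=1)$ for $i\in I$ subject to $(i=0)\wedge(i=1)=0$. *)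

theory Defs
  imports Main "HOL-Library.FuncSet"
begin

datatype dmt = V nat | Zr | On | Mt dmt dmt | Jn dmt dmt | Ng dmt

inductive dmeq :: "dmt \<Rightarrow> dmt \<Rightarrow> bool" where
  refl: "dmeq x x"
| sym: "dmeq x y \<Longrightarrow> dmeq y x"
| trans: "dmeq x y \<Longrightarrow> dmeq y z \<Longrightarrow> dmeq x z"
| cong_Mt: "dmeq x x' \<Longrightarrow> dmeq y y' \<Longrightarrow> dmeq (Mt x y) (Mt x' y')"
| cong_Jn: "dmeq x x' \<Longrightarrow> dmeq y y' \<Longrightarrow> dmeq (Jn x y) (Jn x' y')"
| cong_Ng: "dmeq x x' \<Longrightarrow> dmeq (Ng x) (Ng x')"
| Mt_assoc: "dmeq (Mt (Mt x y) z) (Mt x (Mt y z))"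
| Jn_assoc: "dmeq (Jn (Jn x y) z) (Jn x (Jn y z))"
| Mt_comm: "dmeq (Mt x y) (Mt y x)"
| Jn_comm: "dmeq (Jn x y) (Jn y x)"
| Mt_idem: "dmeq (Mt x x) x"
| Jn_idem: "dmeq (Jn x x) x"
| Mt_absorb: "dmeq (Mt x (Jn x y)) x"
| Jn_absorb: "dmeq (Jn x (Mt x y)) x"
| distrib: "dmeq (Mt x (Jn y z)) (Jn (Mt x y) (Mt x z))"
| Mt_One: "dmeq (Mt x On) x"
| Jn_Zr: "dmeq (Jn x Zr) x"
| Ng_Ng: "dmeq (Ng (Ng x)) x"
| Ng_Mt: "dmeq (Ng (Mt x y)) (Jn (Ng x) (Ng y))"
| Ng_Jn: "dmeq (Ng (Jn x y)) (Mt (Ng x) (Ng y))"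
| Ng_Zr: "dmeq (Ng Zr) On"

quotient_type dm = dmt / dmeq
  by (rule equivpI) (auto simp: reflp_def symp_def transp_def intro: dmeq.intros)

fun tvars :: "dmt \<Rightarrow> nat set" where
  "tvars (V i) = {i}"
| "tvars Zr = {}"
| "tvars On = {}"
| "tvars (Mt x y) = tvars x \<union> tvars y"
| "tvars (Jn x y) = tvars x \<union> tvars y"
| "tvars (Ng x) = tvars x"

fun tsubst :: "(nat \<Rightarrow> dmt) \<Rightarrow> dmt \<Rightarrow> dmt" where
  "tsubst s (V i) = s i"
| "tsubst s Zr = Zr"
| "tsubst s On = On"
| "tsubst s (Mt x y) = Mt (tsubst s x) (tsubst s y)"
| "tsubst s (Jn x y) = Jn (tsubst s x) (tsubst s y)"
| "tsubst s (Ng x) = Ng (tsubst s x)"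

definition dM :: "nat set \<Rightarrow> dm set" where
  "dM I = {x. \<exists>t. x = abs_dm t \<and> tvars t \<subseteq> I}"

definition dOne :: dm where "dOne = abs_dm On"
definition dVar :: "nat \<Rightarrow> dm" where "dVar i = abs_dm (V i)"

definition dsubst :: "(nat \<Rightarrow> dm) \<Rightarrow> dm \<Rightarrow> dm" where
  "dsubst s x = abs_dm (tsubst (rep_dm \<circ> s) (rep_dm x))"

text \<open>Objects: finite sets of names.  A morphism K \<rightarrow> J is a function J \<rightarrow> dM(K)
  (extensional: undefined outside J).\<close>
definition hom :: "nat set \<Rightarrow> nat set \<Rightarrow> (nat \<Rightarrow> dm) set" where
  "hom K J = (J \<rightarrow>\<^sub>E dM K)"

text \<open>Composition by substitution: for h : L \<rightarrow> K and g : K \<rightarrow> J, g \<circ> h : L \<rightarrow> J.\<close>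
definition cmp :: "nat set \<Rightarrow> (nat \<Rightarrow> dm) \<Rightarrow> (nat \<Rightarrow> dm) \<Rightarrow> (nat \<Rightarrow> dm)" where
  "cmp J g h = (\<lambda>j\<in>J. dsubst h (g j))"

section \<open>Sieves, the presheaf F (image of I \<rightarrow> \<Omega>, r \<mapsto> (r = 1))\<close>

type_synonym sieve = "(nat set \<times> (nat \<Rightarrow> dm)) set"

definition eq1 :: "nat set \<Rightarrow> dm \<Rightarrow> sieve" where
  "eq1 J r = {(K, g). finite K \<and> g \<in> hom K J \<and> dsubst g r = dOne}"

definition FF :: "nat set \<Rightarrow> sieve set" where
  "FF J = eq1 J ` dM J"

definition sres :: "nat set \<Rightarrow> nat set \<Rightarrow> (nat \<Rightarrow> dm) \<Rightarrow> sieve \<Rightarrow> sieve" where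
  "sres J K g S = {(L, h). finite L \<and> h \<in> hom L K \<and> (L, cmp J g h) \<in> S}"

section \<open>The exponential F^I, (F^I)(J) = Nat(y J \<times> I, F)\<close>

type_synonym fam = "nat set \<Rightarrow> (nat \<Rightarrow> dm) \<Rightarrow> dm \<Rightarrow> sieve"

text \<open>An element f of (F^I)(J): for each stage K, g : K \<rightarrow> J and r \<in> I(K) = dM(K),
  f K g r \<in> F(K), natural in K; extensional (empty) outside its domain.\<close>
definition FI :: "nat set \<Rightarrow> fam set" where
  "FI J = {f.
     (\<forall>K g r. finite K \<and> g \<in> hom K J \<and> r \<in> dM K \<longrightarrow> f K g r \<in> FF K)
   \<and> (\<forall>K L g h r. finite K \<and> finite L \<and> g \<in> hom K J \<and> h \<in> hom L K \<and> r \<in> dM K \<longrightarrow>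
        f L (cmp J g h) (dsubst h r) = sres K L h (f K g r))
   \<and> (\<forall>K g r. \<not> (finite K \<and> g \<in> hom K J \<and> r \<in> dM K) \<longrightarrow> f K g r = {})}"

definition fres :: "nat set \<Rightarrow> nat set \<Rightarrow> (nat \<Rightarrow> dm) \<Rightarrow> fam \<Rightarrow> fam" where
  "fres J K g f = (\<lambda>L h r. if finite L \<and> h \<in> hom L K \<and> r \<in> dM L
                            then f L (cmp J g h) r else {})"

definition nat_FI_F :: "(nat set \<Rightarrow> fam \<Rightarrow> sieve) \<Rightarrow> bool" where
  "nat_FI_F A \<longleftrightarrow>
     (\<forall>J f. finite J \<and> f \<in> FI J \<longrightarrow> A J f \<in> FF J)
   \<and> (\<forall>J K g f. finite J \<and> finite K \<and> g \<in> hom K J \<and> f \<in> FI J \<longrightarrow>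
        A K (fres J K g f) = sres J K g (A J f))"

end

theory Submission
  imports Defs
begin

text \<open>\<forall>f is the sieve of those g for which f(g \<circ> h, r) holds for all further h and r;
  the adjunction and naturality are then formal, and the substance is that this sieve is
  again of the form (s = 1). Evaluate De Morgan terms in the three-element Kleene algebra
  0 < \<onehalf> < 1. An element of the free algebra equals 1 iff it evaluates to 1 when every
  name is sent to \<onehalf>, and substitution can only increase such values in the information
  order, in which \<onehalf> is least. Applying f at a fresh generic name i gives (s = 1), so
  \<forall>f holds at g exactly when s evaluates to 1 at g with i sent to \<onehalf>; this is
  (t = 1) for the term t obtained from s by pushing negations to the names and replacing the
  literals i and \<not>i by 0.\<close>

section \<open>Substitution and the category of cubes\<close>

lemma abs_rep_dm [simp]: "abs_dm (rep_dm x) = x"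
  by (rule Quotient3_abs_rep[OF Quotient3_dm])

lemma dmeq_rep_abs_dm: "dmeq (rep_dm (abs_dm t)) t"
  using dm.abs_eq_iff[of "rep_dm (abs_dm t)" t] by simp

lemma dmeq_tsubst: "dmeq x y \<Longrightarrow> dmeq (tsubst s x) (tsubst s y)"
  by (induction rule: dmeq.induct) (auto intro: dmeq.intros)

lemma dmeq_tsubst_cong: "(\<And>j. j \<in> tvars t \<Longrightarrow> dmeq (s j) (s' j)) \<Longrightarrow> dmeq (tsubst s t) (tsubst s' t)"
  by (induction t) (auto intro: dmeq.intros)

lemma tsubst_tsubst: "tsubst s (tsubst s' t) = tsubst (tsubst s \<circ> s') t"
  by (induction t) auto

lemma tsubst_V: "tsubst V t = t"
  by (induction t) auto

lemma tvars_tsubst: "tvars (tsubst s t) = (\<Union>j\<in>tvars t. tvars (s j))"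
  by (induction t) auto

lemma dsubst_abs_dm: "dsubst h (abs_dm t) = abs_dm (tsubst (rep_dm \<circ> h) t)"
  unfolding dsubst_def dm.abs_eq_iff by (rule dmeq_tsubst[OF dmeq_rep_abs_dm])

lemma dM_obtain:
  assumes "x \<in> dM K"
  obtains t where "tvars t \<subseteq> K" "x = abs_dm t"
  using assms unfolding dM_def by blast

lemma dsubst_dVar [simp]: "dsubst h (dVar j) = h j"
  unfolding dVar_def dsubst_abs_dm by simp

lemma dVar_in_dM: "j \<in> K \<Longrightarrow> dVar j \<in> dM K"
  unfolding dVar_def dM_def by force

lemma dsubst_in_dM:
  assumes h: "h \<in> hom L K" and x: "x \<in> dM K"
  shows "dsubst h x \<in> dM L"
proof -
  obtain t where t: "tvars t \<subseteq> K" "x = abs_dm t" using dM_obtain[OF x] .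
  have "\<forall>j\<in>K. \<exists>u. tvars u \<subseteq> L \<and> h j = abs_dm u"
    using h unfolding hom_def dM_def by auto
  then obtain u where u: "\<And>j. j \<in> K \<Longrightarrow> tvars (u j) \<subseteq> L \<and> h j = abs_dm (u j)"
    by metis
  have "dmeq (tsubst (rep_dm \<circ> h) t) (tsubst u t)"
    using u t(1) dmeq_rep_abs_dm by (intro dmeq_tsubst_cong) auto
  then have "dsubst h x = abs_dm (tsubst u t)"
    unfolding t(2) dsubst_abs_dm dm.abs_eq_iff .
  moreover have "tvars (tsubst u t) \<subseteq> L"
    unfolding tvars_tsubst using u t(1) by blast
  ultimately show ?thesis unfolding dM_def by blast
qed

lemma dsubst_dsubst:
  assumes "x \<in> dM K"
  shows "dsubst h (dsubst g x) = dsubst (cmp K g h) x"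
proof -
  obtain t where t: "tvars t \<subseteq> K" "x = abs_dm t" using dM_obtain[OF assms] .
  have "dmeq (tsubst (rep_dm \<circ> h) (tsubst (rep_dm \<circ> g) t)) (tsubst (rep_dm \<circ> cmp K g h) t)"
    unfolding tsubst_tsubst using t(1)
    by (intro dmeq_tsubst_cong) (auto simp: cmp_def dsubst_def intro: dmeq.sym[OF dmeq_rep_abs_dm])
  then show ?thesis
    unfolding t(2) dsubst_abs_dm dm.abs_eq_iff
    using dmeq.trans[OF dmeq_tsubst[OF dmeq_rep_abs_dm]] by blast
qed

lemma cmp_in_hom: "g \<in> hom M K \<Longrightarrow> h \<in> hom L M \<Longrightarrow> cmp K g h \<in> hom L K"
  unfolding hom_def cmp_def by (auto intro: dsubst_in_dM[unfolded hom_def])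

lemma cmp_assoc: "g \<in> hom M J \<Longrightarrow> cmp J g (cmp M g' h) = cmp J (cmp J g g') h"
  unfolding cmp_def hom_def by (intro restrict_ext) (auto simp: PiE_iff dsubst_dsubst cmp_def)

definition id_hom :: "nat set \<Rightarrow> nat \<Rightarrow> dm" where
  "id_hom L = (\<lambda>j\<in>L. dVar j)"

lemma id_hom_in_hom: "L \<subseteq> L' \<Longrightarrow> id_hom L \<in> hom L' L"
  unfolding id_hom_def hom_def using dVar_in_dM by auto

lemma dsubst_id_hom: "x \<in> dM L \<Longrightarrow> dsubst (id_hom L) x = x"
proof -
  assume "x \<in> dM L"
  then obtain t where t: "tvars t \<subseteq> L" "x = abs_dm t" by (rule dM_obtain)
  have "dmeq (tsubst (rep_dm \<circ> id_hom L) t) (tsubst V t)"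
    using t(1) dmeq_rep_abs_dm by (intro dmeq_tsubst_cong) (auto simp: id_hom_def dVar_def)
  then show ?thesis unfolding t(2) dsubst_abs_dm dm.abs_eq_iff tsubst_V .
qed

lemma cmp_id_hom_right: "g \<in> hom L K \<Longrightarrow> cmp K g (id_hom L) = g"
  unfolding cmp_def hom_def by (auto simp: PiE_def Pi_iff extensional_def dsubst_id_hom intro!: ext)

lemma cmp_id_hom_left: "J \<subseteq> J' \<Longrightarrow> cmp J (id_hom J) q = restrict q J"
  unfolding cmp_def id_hom_def by auto

section \<open>Three-valued evaluation of De Morgan terms\<close>

text \<open>Values 0, 1, 2 stand for 0 < \<onehalf> < 1 of the Kleene chain; names are clamped so
  that every valuation lands in it.\<close>

fun keval :: "(nat \<Rightarrow> nat) \<Rightarrow> dmt \<Rightarrow> nat" where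
  "keval \<rho> (V i) = min (\<rho> i) 2"
| "keval \<rho> Zr = 0"
| "keval \<rho> On = 2"
| "keval \<rho> (Mt x y) = min (keval \<rho> x) (keval \<rho> y)"
| "keval \<rho> (Jn x y) = max (keval \<rho> x) (keval \<rho> y)"
| "keval \<rho> (Ng x) = 2 - keval \<rho> x"

lemma keval_le_2: "keval \<rho> t \<le> 2"
  by (induction t) auto

lemma keval_dmeq: "dmeq x y \<Longrightarrow> keval \<rho> x = keval \<rho> y"
proof (induction rule: dmeq.induct)
  case (Ng_Ng x)
  show ?case using keval_le_2[of \<rho> x] by simp
qed (auto simp: min_def max_def keval_le_2)

lemma keval_tsubst: "keval \<rho> (tsubst s t) = keval (\<lambda>j. keval \<rho> (s j)) t"
  by (induction t) (auto simp: keval_le_2)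

lemma dmeq_Mt_Zr: "dmeq (Mt Zr x) Zr"
  by (meson dmeq.Jn_Zr dmeq.Jn_absorb dmeq.Jn_comm dmeq.sym dmeq.trans)

lemma dmeq_Jn_On: "dmeq (Jn On x) On"
  by (meson dmeq.Mt_One dmeq.Mt_absorb dmeq.Mt_comm dmeq.sym dmeq.trans)

lemma dmeq_Ng_On: "dmeq (Ng On) Zr"
  by (meson dmeq.Ng_Ng dmeq.Ng_Zr dmeq.cong_Ng dmeq.sym dmeq.trans)

lemma keval_mid_extremes:
  "(keval (\<lambda>_. 1) t = 2 \<longrightarrow> dmeq t On) \<and> (keval (\<lambda>_. 1) t = 0 \<longrightarrow> dmeq t Zr)"
proof (induction t)
  case (Mt a b)
  have "dmeq (Mt a b) On" if "dmeq a On" "dmeq b On"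
    by (meson dmeq.Mt_One dmeq.cong_Mt dmeq.refl dmeq.trans that)
  moreover have "dmeq (Mt a b) Zr" if "dmeq a Zr \<or> dmeq b Zr"
    by (meson dmeq.Mt_comm dmeq_Mt_Zr dmeq.cong_Mt dmeq.refl dmeq.trans that)
  ultimately show ?case using Mt keval_le_2[of "\<lambda>_. 1" a] keval_le_2[of "\<lambda>_. 1" b]
    by (auto simp: min_def split: if_splits)
next
  case (Jn a b)
  have "dmeq (Jn a b) Zr" if "dmeq a Zr" "dmeq b Zr"
    by (meson dmeq.Jn_Zr dmeq.cong_Jn dmeq.refl dmeq.trans that)
  moreover have "dmeq (Jn a b) On" if "dmeq a On \<or> dmeq b On"
    by (meson dmeq.Jn_comm dmeq_Jn_On dmeq.cong_Jn dmeq.refl dmeq.trans that)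
  ultimately show ?case using Jn keval_le_2[of "\<lambda>_. 1" a] keval_le_2[of "\<lambda>_. 1" b]
    by (auto simp: max_def split: if_splits)
next
  case (Ng a)
  then show ?case using keval_le_2[of "\<lambda>_. 1" a]
    by (auto intro: dmeq.trans[OF dmeq.cong_Ng] dmeq.Ng_Zr dmeq_Ng_On)
qed (auto intro: dmeq.intros)

text \<open>The information order, with the fixed point \<onehalf> of negation as least element.\<close>

definition info_le :: "nat \<Rightarrow> nat \<Rightarrow> bool" where
  "info_le a b \<longleftrightarrow> a = 1 \<or> a = b"

lemma keval_info_mono:
  assumes "\<And>j. info_le (\<rho> j) (\<rho>' j)"
  shows "info_le (keval \<rho> t) (keval \<rho>' t)"
  using assms
proof (induction t)
  case (Mt a b) then show ?case
    using keval_le_2[of \<rho> a] keval_le_2[of \<rho> b] keval_le_2[of \<rho>' a] keval_le_2[of \<rho>' b]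
    by (auto simp: info_le_def min_def)
next
  case (Jn a b) then show ?case
    using keval_le_2[of \<rho> a] keval_le_2[of \<rho> b] keval_le_2[of \<rho>' a] keval_le_2[of \<rho>' b]
    by (auto simp: info_le_def max_def)
next
  case (V j)
  then have "\<rho> j = 1 \<or> \<rho> j = \<rho>' j" by (simp add: info_le_def)
  then show ?case by (auto simp: info_le_def)
qed (auto simp: info_le_def)

text \<open>Negation normal forms of t and \<not>t with the literals i, \<not>i replaced by 0: these
  literals are never 1 when i is \<onehalf>.\<close>

fun top_at_mid :: "nat \<Rightarrow> dmt \<Rightarrow> dmt" and bot_at_mid :: "nat \<Rightarrow> dmt \<Rightarrow> dmt" where
  "top_at_mid i (V j) = (if j = i then Zr else V j)"
| "top_at_mid i Zr = Zr"
| "top_at_mid i On = On"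
| "top_at_mid i (Mt a b) = Mt (top_at_mid i a) (top_at_mid i b)"
| "top_at_mid i (Jn a b) = Jn (top_at_mid i a) (top_at_mid i b)"
| "top_at_mid i (Ng a) = bot_at_mid i a"
| "bot_at_mid i (V j) = (if j = i then Zr else Ng (V j))"
| "bot_at_mid i Zr = On"
| "bot_at_mid i On = Zr"
| "bot_at_mid i (Mt a b) = Jn (bot_at_mid i a) (bot_at_mid i b)"
| "bot_at_mid i (Jn a b) = Mt (bot_at_mid i a) (bot_at_mid i b)"
| "bot_at_mid i (Ng a) = top_at_mid i a"

lemma keval_top_bot_at_mid:
  assumes "\<sigma> i = 1" and "\<And>j. j \<noteq> i \<Longrightarrow> \<sigma> j = \<rho> j"
  shows "(keval \<rho> (top_at_mid i t) = 2 \<longleftrightarrow> keval \<sigma> t = 2)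
       \<and> (keval \<rho> (bot_at_mid i t) = 2 \<longleftrightarrow> keval \<sigma> t = 0)"
proof (induction t)
  case (Ng a)
  then show ?case using keval_le_2[of \<sigma> a] by auto
next
  case (Mt a b)
  then show ?case
    using keval_le_2[of \<rho> "bot_at_mid i a"] keval_le_2[of \<rho> "bot_at_mid i b"]
      keval_le_2[of \<rho> "top_at_mid i a"] keval_le_2[of \<rho> "top_at_mid i b"]
      keval_le_2[of \<sigma> a] keval_le_2[of \<sigma> b]
    by (auto simp: min_def max_def)
next
  case (Jn a b)
  then show ?case
    using keval_le_2[of \<rho> "bot_at_mid i a"] keval_le_2[of \<rho> "bot_at_mid i b"]
      keval_le_2[of \<rho> "top_at_mid i a"] keval_le_2[of \<rho> "top_at_mid i b"]
      keval_le_2[of \<sigma> a] keval_le_2[of \<sigma> b]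
    by (auto simp: min_def max_def)
qed (use assms in auto)

lemma keval_top_at_mid: "keval \<rho> (top_at_mid i t) = 2 \<longleftrightarrow> keval (\<rho>(i := 1)) t = 2"
  using keval_top_bot_at_mid[of "\<rho>(i := 1)" i \<rho>] by simp

lemma tvars_top_at_mid: "tvars (top_at_mid i t) \<subseteq> tvars t - {i}"
  and tvars_bot_at_mid: "tvars (bot_at_mid i t) \<subseteq> tvars t - {i}"
  by (induction t) auto

definition mid_eval :: "dm \<Rightarrow> nat" where
  "mid_eval x = keval (\<lambda>_. 1) (rep_dm x)"

definition mid_val :: "(nat \<Rightarrow> dm) \<Rightarrow> nat \<Rightarrow> nat" where
  "mid_val h j = mid_eval (h j)"

lemma keval_rep_dm: "x = abs_dm t \<Longrightarrow> keval \<rho> (rep_dm x) = keval \<rho> t"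
  using keval_dmeq[OF dmeq_rep_abs_dm] by blast

lemma mid_eval_abs_dm: "mid_eval (abs_dm t) = keval (\<lambda>_. 1) t"
  unfolding mid_eval_def by (rule keval_rep_dm) simp

lemma mid_eval_dsubst: "mid_eval (dsubst h x) = keval (mid_val h) (rep_dm x)"
  unfolding dsubst_def mid_eval_abs_dm keval_tsubst
  by (simp add: mid_val_def[abs_def] mid_eval_def comp_def)

lemma mid_eval_dVar: "mid_eval (dVar j) = 1"
  by (simp add: dVar_def mid_eval_abs_dm)

lemma eq_dOne_iff_mid_eval: "x = dOne \<longleftrightarrow> mid_eval x = 2"
proof
  assume "mid_eval x = 2"
  then have "dmeq (rep_dm x) On"
    using keval_mid_extremes unfolding mid_eval_def by blast
  then show "x = dOne"
    unfolding dOne_def by (metis abs_rep_dm dm.abs_eq_iff)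
qed (simp add: dOne_def mid_eval_abs_dm)

lemma mid_eval_info_le_dsubst: "info_le (mid_eval x) (mid_eval (dsubst h x))"
  unfolding mid_eval_dsubst unfolding mid_eval_def
  by (rule keval_info_mono) (simp add: info_le_def)

lemma dsubst_dOne: "dsubst h dOne = dOne"
proof -
  have "mid_eval dOne = 2" using eq_dOne_iff_mid_eval by blast
  then have "mid_eval (dsubst h dOne) = 2"
    using mid_eval_info_le_dsubst[of dOne h] by (simp add: info_le_def)
  then show ?thesis using eq_dOne_iff_mid_eval by blast
qed

lemma mid_val_cmp_info_le:
  assumes "g \<in> hom K J"
  shows "info_le (mid_val g j) (mid_val (cmp J g h) j)"
proof (cases "j \<in> J")
  case True
  then show ?thesis
    using mid_eval_info_le_dsubst[of "g j" h] by (simp add: mid_val_def cmp_def)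
next
  case False
  have "g j = undefined" using assms False unfolding hom_def by (rule PiE_arb)
  then have "cmp J g h j = g j" using False by (simp add: cmp_def)
  then show ?thesis by (simp add: mid_val_def info_le_def)
qed

lemma mem_eq1_iff:
  "(L, h) \<in> eq1 J r \<longleftrightarrow> finite L \<and> h \<in> hom L J \<and> keval (mid_val h) (rep_dm r) = 2"
  unfolding eq1_def by (simp add: eq_dOne_iff_mid_eval mid_eval_dsubst)

lemma eq1_cmp_closed:
  assumes a: "a \<in> dM J" and g: "(K, g) \<in> eq1 J a" and h: "h \<in> hom L K" and L: "finite L"
  shows "(L, cmp J g h) \<in> eq1 J a"
proof -
  have g: "g \<in> hom K J" "dsubst g a = dOne" using g unfolding eq1_def by auto
  have "dsubst (cmp J g h) a = dOne"
    using dsubst_dsubst[OF a, of h g] g(2) dsubst_dOne by simp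
  then show ?thesis using cmp_in_hom[OF g(1) h] L unfolding eq1_def by auto
qed

lemma FI_in_FF:
  assumes "f \<in> FI J" "finite K" "g \<in> hom K J" "r \<in> dM K"
  shows "f K g r \<in> FF K"
  using conjunct1[OF assms(1)[unfolded FI_def mem_Collect_eq]] assms(2-4) by blast

lemma FI_natural:
  assumes "f \<in> FI J" "finite K" "finite L" "g \<in> hom K J" "h \<in> hom L K" "r \<in> dM K"
  shows "f L (cmp J g h) (dsubst h r) = sres K L h (f K g r)"
  using conjunct1[OF conjunct2[OF assms(1)[unfolded FI_def mem_Collect_eq]]] assms(2-6) by blast

lemma FI_mem_iff:
  assumes "f \<in> FI J" "finite L" "g \<in> hom L J" "r \<in> dM L" "finite L'" "h \<in> hom L' L"
  shows "(L', h) \<in> f L g r \<longleftrightarrow> (L', id_hom L') \<in> f L' (cmp J g h) (dsubst h r)"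
  using FI_natural[OF assms(1,2,5,3,6,4)] assms(5,6)
  by (simp add: sres_def cmp_id_hom_right id_hom_in_hom)

section \<open>The universal quantifier on F\<close>

text \<open>For a sieve S on L, (L, id_hom L) \<in> S says that S is the maximal sieve, i.e. true.\<close>

definition forall_sieve :: "nat set \<Rightarrow> fam \<Rightarrow> sieve" where
  "forall_sieve J f = {(K, g). finite K \<and> g \<in> hom K J \<and>
     (\<forall>L h r. finite L \<and> h \<in> hom L K \<and> r \<in> dM L \<longrightarrow> (L, id_hom L) \<in> f L (cmp J g h) r)}"

lemma forall_sieve_adjunction:
  assumes \<phi>: "\<phi> \<in> FF J" and f: "f \<in> FI J"
  shows "(\<forall>K g r. finite K \<and> g \<in> hom K J \<and> r \<in> dM K \<longrightarrow> sres J K g \<phi> \<subseteq> f K g r)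
     \<longleftrightarrow> \<phi> \<subseteq> forall_sieve J f" (is "?below \<longleftrightarrow> _")
proof
  obtain a where a: "a \<in> dM J" "\<phi> = eq1 J a" using \<phi> unfolding FF_def by auto
  assume below: ?below
  show "\<phi> \<subseteq> forall_sieve J f"
  proof (rule subrelI)
    fix K g assume Kg: "(K, g) \<in> \<phi>"
    then have K: "finite K" "g \<in> hom K J" using a(2) unfolding eq1_def by auto
    have "(L, id_hom L) \<in> f L (cmp J g h) r" if L: "finite L" "h \<in> hom L K" "r \<in> dM L" for L h r
    proof -
      have gh: "cmp J g h \<in> hom L J" using cmp_in_hom[OF K(2) L(2)] .
      have "(L, cmp J (cmp J g h) (id_hom L)) \<in> \<phi>"
        unfolding cmp_id_hom_right[OF gh] a(2) using eq1_cmp_closed[OF a(1)] Kg a(2) L by auto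
      then have "(L, id_hom L) \<in> sres J L (cmp J g h) \<phi>"
        unfolding sres_def using L id_hom_in_hom[of L L] by auto
      then show ?thesis using below L gh by blast
    qed
    then show "(K, g) \<in> forall_sieve J f" unfolding forall_sieve_def using K by auto
  qed
next
  assume le: "\<phi> \<subseteq> forall_sieve J f"
  show ?below
  proof (intro allI impI subrelI)
    fix K g r L h
    assume K: "finite K \<and> g \<in> hom K J \<and> r \<in> dM K" and Lh: "(L, h) \<in> sres J K g \<phi>"
    then have L: "finite L" "h \<in> hom L K" "(L, cmp J g h) \<in> forall_sieve J f"
      using le unfolding sres_def by auto
    have gh: "cmp J g h \<in> hom L J" using cmp_in_hom K L(2) by blast
    have "(L, id_hom L) \<in> f L (cmp J (cmp J g h) (id_hom L)) (dsubst h r)"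
      using L id_hom_in_hom[of L L] dsubst_in_dM[OF L(2)] K unfolding forall_sieve_def by blast
    then show "(L, h) \<in> f K g r"
      unfolding cmp_id_hom_right[OF gh] using FI_mem_iff[OF f _ _ _ L(1,2)] K by blast
  qed
qed

lemma forall_sieve_natural:
  assumes g: "g \<in> hom K J"
  shows "forall_sieve K (fres J K g f) = sres J K g (forall_sieve J f)"
proof -
  have "fres J K g f L (cmp K g' h) r = f L (cmp J (cmp J g g') h) r"
    if "g' \<in> hom K' K" "finite L" "h \<in> hom L K'" "r \<in> dM L" for K' g' L h r
    using that cmp_in_hom[OF that(1,3)] cmp_assoc[OF g] unfolding fres_def by simp
  then show ?thesis
    unfolding forall_sieve_def sres_def using cmp_in_hom[OF g] by (auto 0 4)
qed

lemma FI_at_generic_point: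
  assumes f: "f \<in> FI J" and J: "finite J" and i: "i \<notin> J"
    and t: "f (insert i J) (id_hom J) (dVar i) = eq1 (insert i J) (abs_dm t)"
    and L: "finite L" "g \<in> hom L J" "r \<in> dM L"
  shows "(L, id_hom L) \<in> f L g r \<longleftrightarrow> keval ((mid_val g)(i := mid_eval r)) t = 2"
proof -
  have q: "g(i := r) \<in> hom L (insert i J)"
    using PiE_fun_upd[where T = "\<lambda>_. dM L", OF L(3) L(2)[unfolded hom_def]] unfolding hom_def .
  have "cmp J (id_hom J) (g(i := r)) = restrict (g(i := r)) J"
    by (rule cmp_id_hom_left) auto
  also have "\<dots> = g"
    using i L(2) unfolding hom_def by (simp add: restrict_fupd PiE_restrict)
  finally have gen: "cmp J (id_hom J) (g(i := r)) = g" .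
  have "f L (cmp J (id_hom J) (g(i := r))) (dsubst (g(i := r)) (dVar i))
      = sres (insert i J) L (g(i := r)) (f (insert i J) (id_hom J) (dVar i))"
    by (rule FI_natural[OF f _ L(1) id_hom_in_hom q dVar_in_dM]) (use J in auto)
  then have "f L g r = sres (insert i J) L (g(i := r)) (eq1 (insert i J) (abs_dm t))"
    unfolding gen t by simp
  then have "(L, id_hom L) \<in> f L g r \<longleftrightarrow> (L, g(i := r)) \<in> eq1 (insert i J) (abs_dm t)"
    unfolding sres_def using L(1) id_hom_in_hom[of L L] cmp_id_hom_right[OF q] by auto
  also have "\<dots> \<longleftrightarrow> keval (mid_val (g(i := r))) t = 2"
    unfolding mem_eq1_iff keval_rep_dm[OF HOL.refl] using q L(1) by blast
  also have "mid_val (g(i := r)) = (mid_val g)(i := mid_eval r)"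
    by (auto simp: mid_val_def)
  finally show ?thesis .
qed

lemma forall_sieve_at_generic_point:
  assumes f: "f \<in> FI J" and J: "finite J" and i: "i \<notin> J"
    and t: "f (insert i J) (id_hom J) (dVar i) = eq1 (insert i J) (abs_dm t)"
  shows "forall_sieve J f = {(K, g). finite K \<and> g \<in> hom K J \<and> keval ((mid_val g)(i := 1)) t = 2}"
proof (intro subset_antisym subrelI)
  fix K g assume "(K, g) \<in> forall_sieve J f"
  then have K: "finite K" "g \<in> hom K J"
    and all: "\<And>L h r. finite L \<Longrightarrow> h \<in> hom L K \<Longrightarrow> r \<in> dM L \<Longrightarrow> (L, id_hom L) \<in> f L (cmp J g h) r"
    unfolding forall_sieve_def by auto
  \<comment> \<open>a fresh name k, of value \<onehalf>, is the least informative choice of r\<close>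
  obtain k where k: "k \<notin> K" using ex_new_if_finite[OF infinite_UNIV_nat K(1)] by blast
  let ?L = "insert k K"
  have inc: "id_hom K \<in> hom ?L K" by (rule id_hom_in_hom) auto
  have "(?L, id_hom ?L) \<in> f ?L (cmp J g (id_hom K)) (dVar k)"
    using all[OF _ inc dVar_in_dM] K(1) by simp
  moreover have "cmp J g (id_hom K) \<in> hom ?L J" using cmp_in_hom[OF K(2) inc] .
  ultimately have "keval ((mid_val g)(i := mid_eval (dVar k))) t = 2"
    using FI_at_generic_point[OF f J i t, of ?L] dVar_in_dM[of k ?L] K(1)
    unfolding cmp_id_hom_right[OF K(2)] by simp
  then show "(K, g) \<in> {(K, g). finite K \<and> g \<in> hom K J \<and> keval ((mid_val g)(i := 1)) t = 2}"
    using K by (simp add: mid_eval_dVar)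
next
  fix K g assume "(K, g) \<in> {(K, g). finite K \<and> g \<in> hom K J \<and> keval ((mid_val g)(i := 1)) t = 2}"
  then have K: "finite K" "g \<in> hom K J" and top: "keval ((mid_val g)(i := 1)) t = 2" by auto
  have "(L, id_hom L) \<in> f L (cmp J g h) r" if L: "finite L" "h \<in> hom L K" "r \<in> dM L" for L h r
  proof -
    have "info_le (((mid_val g)(i := 1)) j) (((mid_val (cmp J g h))(i := mid_eval r)) j)" for j
      using mid_val_cmp_info_le[OF K(2)] by (simp add: info_le_def)
    then have "info_le 2 (keval ((mid_val (cmp J g h))(i := mid_eval r)) t)"
      using keval_info_mono top by metis
    then show ?thesis
      using FI_at_generic_point[OF f J i t L(1) cmp_in_hom[OF K(2) L(2)] L(3)]
      by (simp add: info_le_def)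
  qed
  then show "(K, g) \<in> forall_sieve J f" unfolding forall_sieve_def using K by auto
qed

lemma forall_sieve_in_FF:
  assumes J: "finite J" and f: "f \<in> FI J"
  shows "forall_sieve J f \<in> FF J"
proof -
  obtain i where i: "i \<notin> J" using ex_new_if_finite[OF infinite_UNIV_nat J] by blast
  have "f (insert i J) (id_hom J) (dVar i) \<in> FF (insert i J)"
    by (rule FI_in_FF[OF f _ id_hom_in_hom dVar_in_dM]) (use J in auto)
  then obtain t where t: "tvars t \<subseteq> insert i J"
    "f (insert i J) (id_hom J) (dVar i) = eq1 (insert i J) (abs_dm t)"
    unfolding FF_def by (auto elim: dM_obtain)
  have "forall_sieve J f = eq1 J (abs_dm (top_at_mid i t))"
    unfolding forall_sieve_at_generic_point[OF f J i t(2)]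
    by (auto simp: mem_eq1_iff keval_rep_dm[OF HOL.refl] keval_top_at_mid)
  moreover have "abs_dm (top_at_mid i t) \<in> dM J"
    using tvars_top_at_mid[of i t] t(1) unfolding dM_def by blast
  ultimately show ?thesis unfolding FF_def by blast
qed

theorem mainTheorem6:
  shows "\<exists>A. nat_FI_F A \<and>
    (\<forall>J \<phi> f. finite J \<and> \<phi> \<in> FF J \<and> f \<in> FI J \<longrightarrow>
       ((\<forall>K g r. finite K \<and> g \<in> hom K J \<and> r \<in> dM K \<longrightarrow> sres J K g \<phi> \<subseteq> f K g r)
        \<longleftrightarrow> \<phi> \<subseteq> A J f))"
proof (intro exI[of _ forall_sieve] conjI)
  show "nat_FI_F forall_sieve"
    unfolding nat_FI_F_def by (simp add: forall_sieve_in_FF forall_sieve_natural)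
qed (simp add: forall_sieve_adjunction)

end
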